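(* Let $f\in\mathcal{F}_{G,M}$ be a WTP function, $\tilde f$ its concave relaxation, and $\widetilde F(\tilde x)=\max_{\tilde y\in\widetilde{\mathcal{Y}}_{\mathcal{M}}(\tilde x)}\tilde f(\tilde y)$ for $\tilde x\in\widetilde{\mathcal{X}}_\ell$. Then $\widetilde F$ is $GM^2\sqrt n$-Lipschitz with respect to the Euclidean norm on $\widetilde{\mathcal{X}}_\ell$.
   Context: $\mathcal{M}$ is a matroid on $[n]$ with matroid polytope $\mathcal{P}(\mathcal{M})$. $\widetilde{\mathcal{X}}_\ell=\{\tilde x\in[0,1]^n:\sum_i\tilde x_i\le\ell\}$, $\widetilde{\mathcal{Y}}_{\mathcal{M}}(\tilde x)=\{\tilde y\in[0,1]^n:\tilde y\in\mathcal{P}(\mathcal{M}),\tilde y\le\tilde x\}$. A WTP function is $f(y)=\sum_{j\in\mathcal{C}}c_j\min\{b_j,y\cdot w_j\}$ for $y\in\{0,1\}^n$ with finite $\mathcal{C}$, $c_j>0$, $b_j\in\mathbb{R}_{\ge0}\cup\{\infty\}$, $w_j\in\mathbb{R}^n_{\ge0}$; $\tilde f$ is the same formula on $[0,1]^n$. $\mathcal{F}_{G,M}$ is the class of WTP functions with $|\mathcal{C}|\le G$ and $c_j\le M$, $b_j\le M$, $\|w_j\|_\infty\le M$ for all $j\in\mathcal{C}$. *)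

theory Defs
  imports "HOL-Analysis.Analysis"
begin

text \<open>A matroid on the finite ground set UNIV of type 'n (playing the role of [n]),
  given by its family of independent sets.\<close>
definition matroid :: "('n::finite set \<Rightarrow> bool) \<Rightarrow> bool" where
  "matroid indep \<longleftrightarrow>
     indep {} \<and>
     (\<forall>A B. indep B \<and> A \<subseteq> B \<longrightarrow> indep A) \<and>
     (\<forall>A B. indep A \<and> indep B \<and> card A < card B \<longrightarrow> (\<exists>x\<in>B - A. indep (insert x A)))"

definition indicator_vec :: "'n::finite set \<Rightarrow> real ^ 'n" where
  "indicator_vec I = (\<chi> i. if i \<in> I then 1 else 0)"

definition matroid_polytope :: "('n::finite set \<Rightarrow> bool) \<Rightarrow> (real ^ 'n) set" where
  "matroid_polytope indep = convex hull {indicator_vec I | I. indep I}"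

definition unit_cube :: "(real ^ 'n::finite) set" where
  "unit_cube = {x. \<forall>i. 0 \<le> x $ i \<and> x $ i \<le> 1}"

definition X_tilde :: "real \<Rightarrow> (real ^ 'n::finite) set" where
  "X_tilde l = {x \<in> unit_cube. (\<Sum>i\<in>UNIV. x $ i) \<le> l}"

definition Y_tilde :: "('n::finite set \<Rightarrow> bool) \<Rightarrow> real ^ 'n \<Rightarrow> (real ^ 'n) set" where
  "Y_tilde indep x = {y \<in> unit_cube. y \<in> matroid_polytope indep \<and> (\<forall>i. y $ i \<le> x $ i)}"

text \<open>WTP function data (C, c, b, w); b_j may be \<infinity> (ereal).
  Its relaxation evaluated at y in [0,1]^n.\<close>
definition wtp_tilde ::
  "'c set \<Rightarrow> ('c \<Rightarrow> real) \<Rightarrow> ('c \<Rightarrow> ereal) \<Rightarrow> ('c \<Rightarrow> real ^ 'n::finite) \<Rightarrow> real ^ 'n \<Rightarrow> real" where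
  "wtp_tilde C c b w y = (\<Sum>j\<in>C. c j * real_of_ereal (min (b j) (ereal (y \<bullet> w j))))"

definition is_wtp :: "'c set \<Rightarrow> ('c \<Rightarrow> real) \<Rightarrow> ('c \<Rightarrow> ereal) \<Rightarrow> ('c \<Rightarrow> real ^ 'n::finite) \<Rightarrow> bool" where
  "is_wtp C c b w \<longleftrightarrow> finite C \<and>
     (\<forall>j\<in>C. c j > 0 \<and> b j \<ge> 0 \<and> (\<forall>i. w j $ i \<ge> 0))"

definition in_F_GM :: "nat \<Rightarrow> real \<Rightarrow> 'c set \<Rightarrow> ('c \<Rightarrow> real) \<Rightarrow> ('c \<Rightarrow> ereal) \<Rightarrow> ('c \<Rightarrow> real ^ 'n::finite) \<Rightarrow> bool" where
  "in_F_GM G M C c b w \<longleftrightarrow> is_wtp C c b w \<and> card C \<le> G \<and>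
     (\<forall>j\<in>C. c j \<le> M \<and> b j \<le> ereal M \<and> (\<forall>i. \<bar>w j $ i\<bar> \<le> M))"

definition F_tilde ::
  "('n::finite set \<Rightarrow> bool) \<Rightarrow> 'c set \<Rightarrow> ('c \<Rightarrow> real) \<Rightarrow> ('c \<Rightarrow> ereal) \<Rightarrow> ('c \<Rightarrow> real ^ 'n) \<Rightarrow> real ^ 'n \<Rightarrow> real" where
  "F_tilde indep C c b w x = (SUP y\<in>Y_tilde indep x. wtp_tilde C c b w y)"

end

theory Submission
  imports Defs
begin

text \<open>For x, x' in X, truncating a feasible point y for x coordinatewise at x' gives a feasible
  point for x' (the matroid polytope is down-closed) at distance at most dist x x'. Hence the
  supremum F moves by at most L * dist x x' for any Lipschitz constant L of the relaxation. The
  relaxation is a combination with weights c_j of the 1-Lipschitz maps t \<mapsto> min b_j t composed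
  with the linear forms y \<mapsto> y \<bullet> w_j, so L = \<Sum>_j c_j norm w_j \<le> G M (M sqrt n) works.\<close>

lemma lipschitz_on_sum:
  fixes f :: "'i \<Rightarrow> 'a::metric_space \<Rightarrow> 'b::real_normed_vector"
  assumes "\<And>i. i \<in> I \<Longrightarrow> lipschitz_on (L i) U (f i)"
  shows "lipschitz_on (\<Sum>i\<in>I. L i) U (\<lambda>x. \<Sum>i\<in>I. f i x)"
proof (cases "finite I")
  case True
  then show ?thesis
    using assms by (induction I rule: finite_induct) (auto intro: lipschitz_on_add lipschitz_on_constant)
qed (simp add: lipschitz_on_constant)

lemma lipschitz_on_inner_left: "lipschitz_on (norm w) U (\<lambda>y. y \<bullet> w)"
proof (rule lipschitz_onI)
  fix x y
  have "\<bar>x \<bullet> w - y \<bullet> w\<bar> = \<bar>(x - y) \<bullet> w\<bar>" by (simp add: inner_diff_left)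
  also have "\<dots> \<le> norm w * norm (x - y)" by (metis Cauchy_Schwarz_ineq2 mult.commute)
  finally show "dist (x \<bullet> w) (y \<bullet> w) \<le> norm w * dist x y" by (simp add: dist_real_def dist_norm)
qed simp

lemma lipschitz_on_real_of_ereal_min: "lipschitz_on 1 U (\<lambda>t. real_of_ereal (min b (ereal t)))"
  by (rule lipschitz_onI, cases b) (auto simp: dist_real_def min_def)

lemma lipschitz_on_SUP:
  fixes f :: "'a::heine_borel \<Rightarrow> real" and Y :: "'b::metric_space \<Rightarrow> 'a set"
  assumes f: "lipschitz_on L (\<Union>(Y ` X)) f"
    and nonempty: "\<And>x. x \<in> X \<Longrightarrow> Y x \<noteq> {}"
    and bounded: "\<And>x. x \<in> X \<Longrightarrow> bounded (Y x)"
    and shadow: "\<And>x x' y. x \<in> X \<Longrightarrow> x' \<in> X \<Longrightarrow> y \<in> Y x \<Longrightarrow> \<exists>y'\<in>Y x'. dist y y' \<le> dist x x'"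
  shows "lipschitz_on L X (\<lambda>x. SUP y\<in>Y x. f y)"
proof -
  have L: "0 \<le> L" using lipschitz_on_nonneg[OF f] .
  have bdd: "bdd_above (f ` Y x)" if "x \<in> X" for x
    using that f by (intro bounded_imp_bdd_above bounded_uniformly_continuous_image bounded
        lipschitz_on_uniformly_continuous) (auto elim: lipschitz_on_subset)
  have le: "(SUP y\<in>Y x. f y) \<le> (SUP y\<in>Y x'. f y) + L * dist x x'"
    if x: "x \<in> X" and x': "x' \<in> X" for x x'
  proof (rule cSUP_least[OF nonempty[OF x]])
    fix y assume y: "y \<in> Y x"
    then obtain y' where y': "y' \<in> Y x'" and d: "dist y y' \<le> dist x x'"
      using shadow[OF x x'] by blast
    have "f y \<le> f y' + L * dist y y'"
      using lipschitz_onD[OF f, of y y'] x x' y y' by (force simp: dist_real_def abs_le_iff)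
    also have "\<dots> \<le> (SUP y\<in>Y x'. f y) + L * dist x x'"
      using cSUP_upper[OF y' bdd[OF x']] mult_left_mono[OF d L] by linarith
    finally show "f y \<le> (SUP y\<in>Y x'. f y) + L * dist x x'" .
  qed
  show ?thesis
  proof (rule lipschitz_onI[OF _ L])
    fix x x' assume "x \<in> X" "x' \<in> X"
    with le[of x x'] le[of x' x] show "dist (SUP y\<in>Y x. f y) (SUP y\<in>Y x'. f y) \<le> L * dist x x'"
      by (simp add: dist_real_def dist_commute abs_le_iff)
  qed
qed

lemma lipschitz_on_wtp_tilde:
  "lipschitz_on (\<Sum>j\<in>C. \<bar>c j\<bar> * norm (w j)) U (wtp_tilde C c b w)"
proof -
  have "lipschitz_on (\<Sum>j\<in>C. \<bar>c j\<bar> * (1 * norm (w j))) U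
          (\<lambda>y. \<Sum>j\<in>C. c j * real_of_ereal (min (b j) (ereal (y \<bullet> w j))))"
    by (intro lipschitz_on_sum lipschitz_on_cmult_real lipschitz_on_inner_left
        lipschitz_on_compose2[where g = "\<lambda>t. real_of_ereal (min (b _) (ereal t))"]
        lipschitz_on_real_of_ereal_min)
  then show ?thesis by (simp add: wtp_tilde_def[abs_def])
qed

lemma norm_le_sqrt_card_mult:
  fixes v :: "real^'n"
  assumes "\<And>i. \<bar>v$i\<bar> \<le> M"
  shows "norm v \<le> sqrt (real CARD('n)) * M"
proof -
  have "0 \<le> M" using assms[of undefined] by linarith
  have "norm v = L2_set (\<lambda>i. \<bar>v$i\<bar>) UNIV" by (simp add: norm_vec_def)
  also have "\<dots> \<le> L2_set (\<lambda>i. M) (UNIV::'n set)"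
    using assms by (intro L2_set_mono) auto
  also have "\<dots> = sqrt (real CARD('n)) * M"
    using \<open>0 \<le> M\<close> by (simp add: L2_set_def real_sqrt_mult)
  finally show ?thesis .
qed

lemma in_F_GM_lipschitz_constant_le:
  fixes w :: "'c \<Rightarrow> real^'n"
  assumes "in_F_GM G M C c b w"
  shows "(\<Sum>j\<in>C. \<bar>c j\<bar> * norm (w j)) \<le> real G * M\<^sup>2 * sqrt (real CARD('n))"
proof -
  have C: "finite C" "card C \<le> G" and c: "\<And>j. j \<in> C \<Longrightarrow> 0 < c j \<and> c j \<le> M"
    and w: "\<And>j i. j \<in> C \<Longrightarrow> \<bar>w j $ i\<bar> \<le> M"
    using assms by (auto simp: in_F_GM_def is_wtp_def)
  have "(\<Sum>j\<in>C. \<bar>c j\<bar> * norm (w j)) \<le> (\<Sum>j\<in>C. M * (sqrt (real CARD('n)) * M))"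
    using c by (intro sum_mono mult_mono norm_le_sqrt_card_mult w) force+
  also have "\<dots> = real (card C) * (M\<^sup>2 * sqrt (real CARD('n)))"
    by (simp add: power2_eq_square)
  also have "\<dots> \<le> real G * (M\<^sup>2 * sqrt (real CARD('n)))"
    using C by (intro mult_right_mono) auto
  finally show ?thesis by (simp add: mult.assoc)
qed

lemma indicator_vec_in_matroid_polytope:
  "indep I \<Longrightarrow> indicator_vec I \<in> matroid_polytope indep"
  unfolding matroid_polytope_def by (blast intro: hull_inc)

lemma convex_matroid_polytope: "convex (matroid_polytope indep)"
  by (simp add: matroid_polytope_def)

lemma zero_in_matroid_polytope:
  assumes "matroid indep"
  shows "(0::real^'n) \<in> matroid_polytope indep"
proof -
  have "indicator_vec {} = (0::real^'n)" by (simp add: indicator_vec_def vec_eq_iff)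
  then show ?thesis
    using assms indicator_vec_in_matroid_polytope[of indep "{}"] by (simp add: matroid_def)
qed

lemma matroid_polytope_scale_coordinate:
  fixes y :: "real^'n"
  assumes m: "matroid indep" and t: "0 \<le> t" "t \<le> 1"
    and y: "y \<in> matroid_polytope indep"
  shows "(\<chi> j. if j = i then t * y$j else y$j) \<in> matroid_polytope indep"
proof -
  define T where "T = (\<lambda>v::real^'n. \<chi> j. if j = i then t * v$j else v$j)"
  have "linear T"
    by (rule linearI) (auto simp: T_def vec_eq_iff algebra_simps)
  have gens: "T ` {indicator_vec I | I. indep I} \<subseteq> matroid_polytope indep"
  proof clarify
    fix I assume I: "indep I"
    then have "indep (I - {i})" using m unfolding matroid_def by blast
    moreover have "T (indicator_vec I) = t *\<^sub>R indicator_vec I + (1 - t) *\<^sub>R indicator_vec (I - {i})"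
      by (auto simp: T_def vec_eq_iff indicator_vec_def)
    ultimately show "T (indicator_vec I) \<in> matroid_polytope indep"
      using I t by (auto intro!: convexD[OF convex_matroid_polytope] indicator_vec_in_matroid_polytope)
  qed
  have "T ` matroid_polytope indep = convex hull (T ` {indicator_vec I | I. indep I})"
    unfolding matroid_polytope_def by (rule convex_hull_linear_image[OF \<open>linear T\<close>])
  also have "\<dots> \<subseteq> matroid_polytope indep"
    by (rule hull_minimal[OF gens]) (rule convex_matroid_polytope)
  finally show ?thesis using y by (auto simp: T_def)
qed

lemma matroid_polytope_scale_coordinates:
  assumes m: "matroid indep" and s: "\<And>i. 0 \<le> s i \<and> s i \<le> 1"
    and y: "y \<in> matroid_polytope indep" and "finite S"
  shows "(\<chi> j. if j \<in> S then s j * y$j else y$j) \<in> matroid_polytope indep"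
  using \<open>finite S\<close>
proof (induction S rule: finite_induct)
  case empty
  then show ?case using y by simp
next
  case (insert i S)
  let ?z = "\<chi> j. if j \<in> S then s j * y$j else y$j"
  have "(\<chi> j. if j = i then s i * ?z$j else ?z$j) \<in> matroid_polytope indep"
    using s by (intro matroid_polytope_scale_coordinate[OF m _ _ insert.IH]) auto
  moreover have "(\<chi> j. if j = i then s i * ?z$j else ?z$j)
      = (\<chi> j. if j \<in> insert i S then s j * y$j else y$j)"
    using insert.hyps by (auto simp: vec_eq_iff)
  ultimately show ?case by simp
qed

lemma matroid_polytope_down_closed:
  assumes m: "matroid indep" and y: "y \<in> matroid_polytope indep"
    and z: "\<And>i. 0 \<le> z$i \<and> z$i \<le> y$i"
  shows "z \<in> matroid_polytope indep"
proof -
  define s where "s i = (if y$i = 0 then 1 else z$i / y$i)" for i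
  have s: "0 \<le> s i \<and> s i \<le> 1" for i
    using z[of i] by (auto simp: s_def divide_le_eq_1)
  have "(\<chi> j. if j \<in> UNIV then s j * y$j else y$j) = z"
    using z by (auto simp: vec_eq_iff s_def) (metis order_antisym)
  then show ?thesis
    using matroid_polytope_scale_coordinates[of indep s y UNIV] m s y by simp
qed

lemma unit_cube_eq_cbox: "unit_cube = cbox 0 (1::real^'n)"
  by (auto simp: unit_cube_def mem_box_cart)

lemma bounded_Y_tilde: "bounded (Y_tilde indep x)"
  by (rule bounded_subset[of unit_cube]) (auto simp: unit_cube_eq_cbox Y_tilde_def)

lemma zero_in_Y_tilde:
  assumes "matroid indep" and "x \<in> unit_cube"
  shows "0 \<in> Y_tilde indep x"
  using assms zero_in_matroid_polytope[OF assms(1)] by (auto simp: Y_tilde_def unit_cube_def)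

lemma Y_tilde_truncate:
  assumes m: "matroid indep" and y: "y \<in> Y_tilde indep x" and x': "x' \<in> unit_cube"
  shows "\<exists>y'\<in>Y_tilde indep x'. dist y y' \<le> dist x x'"
proof
  define y' where "y' = (\<chi> i. min (y$i) (x'$i))"
  have y'_nth: "y'$i = min (y$i) (x'$i)" for i
    by (simp add: y'_def)
  have y_cube: "0 \<le> y$i \<and> y$i \<le> 1" and y_le: "y$i \<le> x$i" for i
    using y by (auto simp: Y_tilde_def unit_cube_def)
  have x'_cube: "0 \<le> x'$i \<and> x'$i \<le> 1" for i
    using x' by (simp add: unit_cube_def)
  have "y' \<in> matroid_polytope indep"
  proof (rule matroid_polytope_down_closed[OF m])
    show "y \<in> matroid_polytope indep" using y by (simp add: Y_tilde_def)
    show "0 \<le> y'$i \<and> y'$i \<le> y$i" for i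
      using y_cube[of i] x'_cube[of i] by (simp add: y'_nth)
  qed
  then show "y' \<in> Y_tilde indep x'"
    using y_cube x'_cube by (simp add: Y_tilde_def unit_cube_def y'_nth min_le_iff_disj)
  have "\<bar>y$i - y'$i\<bar> \<le> \<bar>x$i - x'$i\<bar>" for i
    using y_le[of i] by (simp add: y'_nth min_def)
  then show "dist y y' \<le> dist x x'"
    unfolding dist_norm by (intro norm_le_componentwise_cart) simp
qed

theorem lemma17:
  fixes indep :: "'n::finite set \<Rightarrow> bool"
    and C :: "'c set" and c :: "'c \<Rightarrow> real" and b :: "'c \<Rightarrow> ereal"
    and w :: "'c \<Rightarrow> real ^ 'n" and G :: nat and M l :: real
  assumes "matroid indep"
    and "in_F_GM G M C c b w"
  shows "lipschitz_on (real G * M\<^sup>2 * sqrt (real CARD('n))) (X_tilde l) (F_tilde indep C c b w)"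
proof -
  have "lipschitz_on (real G * M\<^sup>2 * sqrt (real CARD('n))) UNIV (wtp_tilde C c b w)"
    using lipschitz_on_wtp_tilde in_F_GM_lipschitz_constant_le[OF assms(2)] by (rule lipschitz_on_le)
  then show ?thesis
    unfolding F_tilde_def
  proof (rule lipschitz_on_SUP[OF lipschitz_on_subset])
    fix x :: "real^'n" assume "x \<in> X_tilde l"
    then show "Y_tilde indep x \<noteq> {}"
      using zero_in_Y_tilde[OF assms(1)] by (auto simp: X_tilde_def)
  next
    fix x x' y :: "real^'n" assume "x \<in> X_tilde l" "x' \<in> X_tilde l" "y \<in> Y_tilde indep x"
    then show "\<exists>y'\<in>Y_tilde indep x'. dist y y' \<le> dist x x'"
      by (simp add: X_tilde_def Y_tilde_truncate[OF assms(1)])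
  qed (simp_all add: bounded_Y_tilde)
qed

end
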